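(* Let $p,q\ge2$ and $m\ge3$ be integers with $p=q$ whenever $m$ is odd. Define $c=-\cos(\pi/m)$ and $\alpha=-\left(\frac{\cos(\pi/p-\pi/q)+\cos(2\pi/m)}{2\sin(\pi/p)\sin(\pi/q)}\right)^{1/2}$. Then $\alpha\le c$. *)

theory Defs
  imports Complex_Main
begin

end

theory Submission
  imports Defs
begin

(* With a = pi/p, b = pi/q, g = pi/m the claim is 2 sin a sin b cos^2 g <= cos (a - b) + cos 2g.
   The difference of the two sides equals cos a cos b + cos 2g (1 - sin a sin b), which is
   nonnegative when m >= 4, since then every factor is. For m = 3 we have a = b, and as
   cos 0 + cos 2g = 2 cos^2 g the inequality reduces to sin^2 a <= 1. *)

lemma cos_pi_divide_n_ge_0:
  assumes "2 \<le> n"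
  shows "0 \<le> cos (pi / real n)"
proof (rule cos_ge_zero)
  show "pi / real n \<le> pi / 2"
    using assms by (intro divide_left_mono) auto
  have "0 \<le> pi / real n"
    by simp
  then show "- (pi / 2) \<le> pi / real n"
    using pi_gt_zero by linarith
qed

lemma cos_diff_add_cos_double_eq:
  fixes a b g :: real
  shows "cos (a - b) + cos (2 * g) - 2 * sin a * sin b * (cos g)\<^sup>2
     = cos a * cos b + cos (2 * g) * (1 - sin a * sin b)"
  unfolding cos_diff cos_double_cos by (simp add: algebra_simps)

lemma sin_mult_sin_mult_cos_sq_le:
  fixes a b g :: real
  assumes "a = b \<or> (0 \<le> cos a \<and> 0 \<le> cos b \<and> 0 \<le> cos (2 * g))"
  shows "2 * sin a * sin b * (cos g)\<^sup>2 \<le> cos (a - b) + cos (2 * g)"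
  using assms
proof
  assume "a = b"
  have "(sin a)\<^sup>2 * (cos g)\<^sup>2 \<le> 1 * (cos g)\<^sup>2"
    by (rule mult_right_mono) (simp_all add: abs_square_le_1)
  then show ?thesis
    using \<open>a = b\<close> by (simp add: cos_double_cos power2_eq_square)
next
  assume nonneg: "0 \<le> cos a \<and> 0 \<le> cos b \<and> 0 \<le> cos (2 * g)"
  have "sin a * sin b \<le> 1"
    using abs_sin_le_one[of a] abs_sin_le_one[of b]
    by (metis abs_mult abs_le_D1 mult_le_one abs_ge_zero)
  then have "0 \<le> cos a * cos b + cos (2 * g) * (1 - sin a * sin b)"
    using nonneg by simp
  then show ?thesis
    using cos_diff_add_cos_double_eq[of a b g] by linarith
qed

lemma cos_le_sqrt_cos_diff_add_cos_double:
  fixes a b g :: real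
  assumes "0 < sin a" and "0 < sin b"
    and "a = b \<or> (0 \<le> cos a \<and> 0 \<le> cos b \<and> 0 \<le> cos (2 * g))"
  shows "cos g \<le> sqrt ((cos (a - b) + cos (2 * g)) / (2 * sin a * sin b))"
proof (rule real_le_rsqrt)
  show "(cos g)\<^sup>2 \<le> (cos (a - b) + cos (2 * g)) / (2 * sin a * sin b)"
    using sin_mult_sin_mult_cos_sq_le[OF assms(3)] assms(1,2)
    by (simp add: pos_le_divide_eq mult.commute)
qed

theorem lemma2p4:
  fixes p q m :: nat
  assumes "p \<ge> 2" and "q \<ge> 2" and "m \<ge> 3"
    and "odd m \<Longrightarrow> p = q"
  shows "- sqrt ((cos (pi / real p - pi / real q) + cos (2 * pi / real m))
                 / (2 * sin (pi / real p) * sin (pi / real q)))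
         \<le> - cos (pi / real m)"
proof -
  have "p = q \<or> 0 \<le> cos (2 * (pi / real m))"
  proof (cases "m = 3")
    case True
    then show ?thesis using assms(4) by simp
  next
    case False
    then have "2 * (pi / real m) \<le> pi / 2"
      using assms(3) by (simp add: field_split_simps)
    moreover have "0 \<le> 2 * (pi / real m)"
      by simp
    ultimately show ?thesis
      by (intro disjI2 cos_ge_zero) linarith+
  qed
  then have "cos (pi / real m)
      \<le> sqrt ((cos (pi / real p - pi / real q) + cos (2 * (pi / real m)))
               / (2 * sin (pi / real p) * sin (pi / real q)))"
    using assms(1,2)
    by (intro cos_le_sqrt_cos_diff_add_cos_double)
       (auto simp: sin_pi_divide_n_gt_0 cos_pi_divide_n_ge_0)
  then show ?thesis by simp
qed

end
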